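(* Let $\rho$ and $\sigma$ be positive definite density matrices on a $d$-dimensional complex Hilbert space, and let $\alpha>1$. Define the R\'enyi relative entropy $D_\alpha(\rho\|\sigma)=\frac{1}{\alpha-1}\log\mathrm{tr}\,[\rho^\alpha\sigma^{1-\alpha}]$. Then \[ D_\alpha(\rho\|\sigma)\ \ge\ \frac{1}{\alpha-1}\Big(\log d+\frac{\alpha}{d}\log\det(\rho)+\frac{1-\alpha}{d}\log\det(\sigma)\Big). \]
   Context: A density matrix is a Hermitian positive semidefinite matrix with trace $1$. Real powers of positive definite matrices are defined by functional calculus. $\log$ denotes the logarithm to a fixed base greater than $1$. *)

theory Defs
  imports Complex_Main "Jordan_Normal_Form.Matrix" "Jordan_Normal_Form.Determinant"
begin

definition adj :: "complex mat \<Rightarrow> complex mat" where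
  "adj A = mat (dim_col A) (dim_row A) (\<lambda>(i,j). cnj (A $$ (j,i)))"

definition mtrace :: "complex mat \<Rightarrow> complex" where
  "mtrace A = (\<Sum>i<dim_row A. A $$ (i,i))"

definition hermitian :: "nat \<Rightarrow> complex mat \<Rightarrow> bool" where
  "hermitian n A \<longleftrightarrow> A \<in> carrier_mat n n \<and> adj A = A"

definition qform :: "complex mat \<Rightarrow> complex vec \<Rightarrow> complex" where
  "qform A v = (\<Sum>i<dim_vec v. cnj (v $ i) * (A *\<^sub>v v) $ i)"

definition pos_semidef :: "nat \<Rightarrow> complex mat \<Rightarrow> bool" where
  "pos_semidef n A \<longleftrightarrow> hermitian n A \<and>
     (\<forall>v \<in> carrier_vec n. Im (qform A v) = 0 \<and> Re (qform A v) \<ge> 0)"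

definition pos_def :: "nat \<Rightarrow> complex mat \<Rightarrow> bool" where
  "pos_def n A \<longleftrightarrow> hermitian n A \<and>
     (\<forall>v \<in> carrier_vec n. v \<noteq> 0\<^sub>v n \<longrightarrow> Im (qform A v) = 0 \<and> Re (qform A v) > 0)"

definition density_matrix :: "nat \<Rightarrow> complex mat \<Rightarrow> bool" where
  "density_matrix n A \<longleftrightarrow> pos_semidef n A \<and> mtrace A = 1"

definition unitary :: "nat \<Rightarrow> complex mat \<Rightarrow> bool" where
  "unitary n U \<longleftrightarrow> U \<in> carrier_mat n n \<and> adj U * U = 1\<^sub>m n"

text \<open>Real power of a positive definite matrix by functional calculus:
  if A = U diag(l) U^* with U unitary and l > 0, then A powr p = U diag(l powr p) U^*
  (independent of the chosen spectral decomposition).\<close>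
definition mat_powr :: "complex mat \<Rightarrow> real \<Rightarrow> complex mat" where
  "mat_powr A p = (SOME B. \<exists>U l. unitary (dim_row A) U \<and> (\<forall>i<dim_row A. l i > (0::real)) \<and>
      A = U * mat_diag (dim_row A) (\<lambda>i. complex_of_real (l i)) * adj U \<and>
      B = U * mat_diag (dim_row A) (\<lambda>i. complex_of_real (l i powr p)) * adj U)"

text \<open>Renyi relative entropy with logarithm to base b; the trace is real (positive),
  so we take its real part.\<close>
definition renyi :: "real \<Rightarrow> real \<Rightarrow> complex mat \<Rightarrow> complex mat \<Rightarrow> real" where
  "renyi b \<alpha> \<rho> \<sigma> = 1 / (\<alpha> - 1) * log b (Re (mtrace (mat_powr \<rho> \<alpha> * mat_powr \<sigma> (1 - \<alpha>))))"

end

theory Submission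
  imports Defs "Jordan_Normal_Form.Spectral_Radius" "HOL-Analysis.Convex"
begin

text \<open>Diagonalize \<open>\<rho> = U diag(l) U\<^sup>*\<close> and \<open>\<sigma> = V diag(m) V\<^sup>*\<close>. The squared moduli
  \<open>P i j = |(U\<^sup>* V) i j|\<^sup>2\<close> of the unitary \<open>U\<^sup>* V\<close> form a doubly stochastic matrix, and
  \<open>tr(\<rho>\<^sup>\<alpha> \<sigma>\<^sup>1\<^sup>-\<^sup>\<alpha>) = \<Sum>i j. P i j \<cdot> l i\<^sup>\<alpha> \<cdot> m j\<^sup>1\<^sup>-\<^sup>\<alpha>\<close>. This is the mean of the numbers
  \<open>d \<cdot> l i\<^sup>\<alpha> \<cdot> m j\<^sup>1\<^sup>-\<^sup>\<alpha>\<close> with the weights \<open>P i j / d\<close>, so by concavity its logarithm is at least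
  the mean of their logarithms. As every row and column of \<open>P\<close> sums to 1, that mean is
  \<open>log d + (\<alpha>/d) \<Sum>i. log (l i) + ((1-\<alpha>)/d) \<Sum>j. log (m j)\<close>, and \<open>\<Sum>i. log (l i) = log (det \<rho>)\<close>.\<close>

lemma square_mult_carrier_mat [simp]:
  "A \<in> carrier_mat n n \<Longrightarrow> B \<in> carrier_mat n n \<Longrightarrow> A * B \<in> carrier_mat n n"
  by (rule mult_carrier_mat)

lemma mat_diag_dims [simp]: "dim_row (mat_diag n f) = n" "dim_col (mat_diag n f) = n"
  unfolding mat_diag_def by auto

lemma adj_carrier [simp]: "A \<in> carrier_mat n m \<Longrightarrow> adj A \<in> carrier_mat m n"
  unfolding adj_def by auto

lemma adj_dims [simp]: "dim_row (adj A) = dim_col A" "dim_col (adj A) = dim_row A"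
  unfolding adj_def by auto

lemma adj_index [simp]: "i < dim_col A \<Longrightarrow> j < dim_row A \<Longrightarrow> adj A $$ (i,j) = cnj (A $$ (j,i))"
  unfolding adj_def by auto

lemma adj_adj [simp]: "adj (adj A) = A"
  by (rule eq_matI) auto

lemma adj_mult:
  assumes "A \<in> carrier_mat n m" "B \<in> carrier_mat m k"
  shows "adj (A * B) = adj B * adj A"
  by (rule eq_matI) (use assms in \<open>auto simp: scalar_prod_def intro!: sum.cong\<close>)

lemma mtrace_mult_comm:
  assumes "A \<in> carrier_mat n m" and "B \<in> carrier_mat m n"
  shows "mtrace (A * B) = mtrace (B * A)"
proof -
  have "mtrace (A * B) = (\<Sum>i<n. \<Sum>k<m. A $$ (i,k) * B $$ (k,i))"
    unfolding mtrace_def using assms by (simp add: scalar_prod_def lessThan_atLeast0)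
  also have "\<dots> = (\<Sum>k<m. \<Sum>i<n. B $$ (k,i) * A $$ (i,k))"
    by (subst sum.swap) (simp add: mult.commute)
  also have "\<dots> = mtrace (B * A)"
    unfolding mtrace_def using assms by (simp add: scalar_prod_def lessThan_atLeast0)
  finally show ?thesis .
qed

lemma unitary_right_inverse: "unitary n U \<Longrightarrow> U * adj U = 1\<^sub>m n"
  using mat_mult_left_right_inverse[of "adj U" n U] unfolding unitary_def by auto

lemma unitary_adj: "unitary n U \<Longrightarrow> unitary n (adj U)"
  using unitary_right_inverse unfolding unitary_def by auto

lemma unitary_mult:
  assumes "unitary n U" "unitary n V"
  shows "unitary n (U * V)"
proof -
  have U: "U \<in> carrier_mat n n" and V: "V \<in> carrier_mat n n"
    using assms unfolding unitary_def by auto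
  have "adj (U * V) * (U * V) = adj V * ((adj U * U) * V)"
    using U V by (simp add: adj_mult[OF U V] assoc_mult_mat[of _ n n _ n _ n])
  also have "\<dots> = 1\<^sub>m n"
    using assms V unfolding unitary_def by simp
  finally show ?thesis
    using U V unfolding unitary_def by auto
qed

lemma unitary_conj_cancel:
  assumes "unitary n W" and A: "A \<in> carrier_mat n n"
  shows "W * (adj W * A * W) * adj W = A"
proof -
  have W: "W \<in> carrier_mat n n" using assms unfolding unitary_def by auto
  have "W * (adj W * A * W) * adj W = (W * adj W) * A * (W * adj W)"
    using W A by (simp add: assoc_mult_mat[of _ n n _ n _ n])
  then show ?thesis
    using unitary_right_inverse[OF assms(1)] A by simp
qed

lemma unitary_col_norm:
  assumes W: "unitary n W" and i: "i < n"
  shows "(\<Sum>j<n. (cmod (W $$ (j,i)))\<^sup>2) = 1"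
proof -
  have [simp]: "dim_row W = n" "dim_col W = n" using W unfolding unitary_def by auto
  have "(adj W * W) $$ (i,i) = 1" using W i unfolding unitary_def by simp
  moreover have "(adj W * W) $$ (i,i) = (\<Sum>j<n. W $$ (j,i) * cnj (W $$ (j,i)))"
    using i by (simp add: scalar_prod_def lessThan_atLeast0 mult.commute)
  ultimately have "complex_of_real (\<Sum>j<n. (cmod (W $$ (j,i)))\<^sup>2) = 1"
    by (simp only: of_real_sum complex_norm_square)
  then show ?thesis using of_real_eq_1_iff by blast
qed

lemma unitary_row_norm:
  assumes "unitary n W" and "i < n"
  shows "(\<Sum>j<n. (cmod (W $$ (i,j)))\<^sup>2) = 1"
proof -
  have [simp]: "dim_row W = n" "dim_col W = n" using assms unfolding unitary_def by auto
  have "(\<Sum>j<n. (cmod (adj W $$ (j,i)))\<^sup>2) = 1"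
    by (rule unitary_col_norm[OF unitary_adj[OF assms(1)] assms(2)])
  then show ?thesis using assms(2) by simp
qed

lemma unitary_normalize_corthogonal:
  fixes ws :: "complex vec list"
  assumes ws: "set ws \<subseteq> carrier_vec n" "corthogonal ws" "length ws = n"
  defines "s \<equiv> \<lambda>i. sqrt (\<Sum>k<n. (cmod (ws!i$k))\<^sup>2)"
  shows "unitary n (mat n n (\<lambda>(k,i). ws!i$k / complex_of_real (s i)))"
proof -
  define W where "W = mat n n (\<lambda>(k,i). ws!i$k / complex_of_real (s i))"
  have sq: "ws!i \<bullet>c ws!i = complex_of_real ((s i)\<^sup>2)" if "i < n" for i
  proof -
    have d: "dim_vec (ws!i) = n" using ws that by (auto dest!: nth_mem)
    have "ws!i \<bullet>c ws!i = (\<Sum>k<n. ws!i$k * cnj (ws!i$k))"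
      by (simp add: scalar_prod_def d lessThan_atLeast0)
    also have "\<dots> = complex_of_real (\<Sum>k<n. (cmod (ws!i$k))\<^sup>2)"
      by (simp only: of_real_sum complex_norm_square)
    finally show ?thesis unfolding s_def by (simp add: sum_nonneg)
  qed
  have pos: "s i > 0" if "i < n" for i
  proof -
    have "ws!i \<bullet>c ws!i \<noteq> 0" using corthogonalD[OF ws(2), of i i] ws(3) that by auto
    then have "s i \<noteq> 0" using sq[OF that] by auto
    moreover have "s i \<ge> 0" unfolding s_def by (simp add: sum_nonneg)
    ultimately show ?thesis by simp
  qed
  have "adj W * W = 1\<^sub>m n"
  proof (rule eq_matI)
    fix i j assume "i < dim_row (1\<^sub>m n)" and "j < dim_col (1\<^sub>m n)"
    then have i: "i < n" and j: "j < n" by auto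
    have dj: "dim_vec (ws!i) = n" using ws i by (auto dest!: nth_mem)
    have "(adj W * W) $$ (i,j)
        = (\<Sum>k<n. cnj (ws!i$k / complex_of_real (s i)) * (ws!j$k / complex_of_real (s j)))"
      using i j by (simp add: scalar_prod_def W_def lessThan_atLeast0)
    also have "\<dots> = (ws!j \<bullet>c ws!i) / (complex_of_real (s i) * complex_of_real (s j))"
      by (simp add: scalar_prod_def dj lessThan_atLeast0 sum_divide_distrib mult.commute)
    also have "\<dots> = 1\<^sub>m n $$ (i,j)"
    proof (cases "i = j")
      case True
      then show ?thesis using sq[OF i] pos[OF i] i by (simp add: power2_eq_square)
    next
      case False
      then show ?thesis using corthogonalD[OF ws(2), of j i] ws(3) i j by auto
    qed
    finally show "(adj W * W) $$ (i,j) = 1\<^sub>m n $$ (i,j)" .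
  qed (auto simp: W_def)
  then show ?thesis unfolding unitary_def W_def by auto
qed

lemma unitary_with_first_column:
  assumes v: "v \<in> carrier_vec n" "v \<noteq> 0\<^sub>v n"
  shows "\<exists>W c. unitary n W \<and> col W 0 = c \<cdot>\<^sub>v v"
proof -
  have "n \<noteq> 0"
  proof
    assume "n = 0"
    then have "v = 0\<^sub>v n" using v(1) by (intro eq_vecI) auto
    with v(2) show False ..
  qed
  interpret cof_vec_space n "TYPE(complex)" .
  define b where "b = basis_completion v"
  from basis_completion[OF v, folded b_def]
  have b: "set b \<subseteq> carrier_vec n" "distinct b" "\<not> lin_dep (set b)" "hd b = v" "length b = n"
    by auto
  then obtain vs where bv: "b = v # vs" using \<open>n \<noteq> 0\<close> by (cases b) auto
  define ws where "ws = gram_schmidt n b"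
  from gram_schmidt_result[OF b(1-3) ws_def]
  have ws: "set ws \<subseteq> carrier_vec n" "corthogonal ws" "length ws = n" using b(5) by auto
  have "hd ws = v" unfolding ws_def bv using v(1) by simp
  then have ws0: "ws ! 0 = v" using ws(3) b(5) bv by (cases ws) auto
  define s where "s = (\<lambda>i. sqrt (\<Sum>k<n. (cmod (ws!i$k))\<^sup>2))"
  define W where "W = mat n n (\<lambda>(k,i). ws!i$k / complex_of_real (s i))"
  have "unitary n W" unfolding W_def s_def by (rule unitary_normalize_corthogonal[OF ws])
  moreover have "col W 0 = (1 / complex_of_real (s 0)) \<cdot>\<^sub>v v"
    unfolding W_def by (rule eq_vecI) (use v(1) ws0 in auto)
  ultimately show ?thesis by blast
qed

subsection \<open>The spectral theorem\<close>

lemma unitary_conj_first_column: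
  assumes A: "A \<in> carrier_mat n n" and W: "unitary n W"
    and ev: "A *\<^sub>v col W 0 = e \<cdot>\<^sub>v col W 0" and i: "i < n"
  shows "(adj W * A * W) $$ (i,0) = (if i = 0 then e else 0)"
proof -
  have Wc: "W \<in> carrier_mat n n" and WW: "adj W * W = 1\<^sub>m n"
    using W unfolding unitary_def by auto
  have c: "col (A * W) 0 = e \<cdot>\<^sub>v col W 0" using col_mult2[OF A Wc, of 0] i ev by simp
  have "(adj W * A * W) $$ (i,0) = (adj W * (A * W)) $$ (i,0)"
    using A Wc by (simp add: assoc_mult_mat[of _ n n _ n _ n])
  also have "\<dots> = row (adj W) i \<bullet> col (A * W) 0" using i A Wc by simp
  also have "\<dots> = e * (row (adj W) i \<bullet> col W 0)" unfolding c using i Wc by simp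
  also have "row (adj W) i \<bullet> col W 0 = (adj W * W) $$ (i,0)" using i Wc by simp
  also have "\<dots> = (if i = 0 then 1 else 0)" unfolding WW using i by simp
  finally show ?thesis by simp
qed

lemma hermitian_unitary_conj:
  assumes "hermitian n A" and W: "W \<in> carrier_mat n n"
  shows "hermitian n (adj W * A * W)"
proof -
  have A: "A \<in> carrier_mat n n" and hA: "adj A = A"
    using assms(1) unfolding hermitian_def by auto
  have "adj (adj W * A * W) = adj W * adj (adj W * A)"
    by (rule adj_mult[of _ n n _ n]) (use A W in auto)
  also have "adj (adj W * A) = adj A * W"
    by (subst adj_mult[of _ n n _ n]) (use A W in auto)
  finally show ?thesis
    unfolding hermitian_def hA using A W by (simp add: assoc_mult_mat[of _ n n _ n _ n])
qed

lemma hermitian_lower_block: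
  assumes "hermitian (Suc n) A"
  shows "hermitian n (mat n n (\<lambda>(i,j). A $$ (Suc i, Suc j)))"
proof -
  have A: "A \<in> carrier_mat (Suc n) (Suc n)" and hA: "adj A = A"
    using assms unfolding hermitian_def by auto
  have entries: "cnj (A $$ (Suc j, Suc i)) = A $$ (Suc i, Suc j)" if "i < n" "j < n" for i j
  proof -
    have "cnj (A $$ (Suc j, Suc i)) = adj A $$ (Suc i, Suc j)" using that A by simp
    then show ?thesis by (simp add: hA)
  qed
  have "adj (mat n n (\<lambda>(i,j). A $$ (Suc i, Suc j))) = mat n n (\<lambda>(i,j). A $$ (Suc i, Suc j))"
    by (rule eq_matI) (auto simp: entries)
  then show ?thesis unfolding hermitian_def by simp
qed

lemma hermitian_first_column_block:
  assumes hA: "hermitian (Suc n) A"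
    and col0: "\<And>i. i < Suc n \<Longrightarrow> A $$ (i,0) = (if i = 0 then e else 0)"
  shows "A = four_block_mat (mat_diag 1 (\<lambda>_. complex_of_real (Re e))) (0\<^sub>m 1 n) (0\<^sub>m n 1)
               (mat n n (\<lambda>(i,j). A $$ (Suc i, Suc j)))"
proof -
  have A: "A \<in> carrier_mat (Suc n) (Suc n)" and adjA: "adj A = A"
    using hA unfolding hermitian_def by auto
  have conj_col0: "A $$ (0,j) = cnj (A $$ (j,0))" if "j < Suc n" for j
  proof -
    have "A $$ (0,j) = adj A $$ (0,j)" by (simp add: adjA)
    also have "\<dots> = cnj (A $$ (j,0))" using that A by simp
    finally show ?thesis .
  qed
  have "cnj e = e" using conj_col0[of 0] col0[of 0] by simp
  then have e: "complex_of_real (Re e) = e" by (simp add: complex_eq_iff)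
  have row0: "A $$ (0,j) = (if j = 0 then e else 0)" if "j < Suc n" for j
    using conj_col0[OF that] col0[OF that] \<open>cnj e = e\<close> by simp
  let ?B = "four_block_mat (mat_diag 1 (\<lambda>_. complex_of_real (Re e))) (0\<^sub>m 1 n) (0\<^sub>m n 1)
               (mat n n (\<lambda>(i,j). A $$ (Suc i, Suc j)))"
  show ?thesis
  proof (rule eq_matI)
    fix i j assume "i < dim_row ?B" and "j < dim_col ?B"
    then have i: "i < Suc n" and j: "j < Suc n" by auto
    show "A $$ (i,j) = ?B $$ (i,j)"
      using col0[OF i] row0[OF j] e i j by (cases i; cases j) (auto simp: mat_diag_def)
  qed (use A in auto)
qed

lemma unitary_block_diag:
  assumes U: "unitary n U"
  defines "U' \<equiv> four_block_mat (1\<^sub>m 1) (0\<^sub>m 1 n) (0\<^sub>m n 1) U"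
  shows "unitary (Suc n) U'"
    and "four_block_mat (mat_diag 1 (\<lambda>_. complex_of_real c)) (0\<^sub>m 1 n) (0\<^sub>m n 1)
           (U * mat_diag n (\<lambda>i. complex_of_real (l i)) * adj U)
         = U' * mat_diag (Suc n) (\<lambda>i. complex_of_real (if i = 0 then c else l (i - 1))) * adj U'"
proof -
  have Uc [simp]: "U \<in> carrier_mat n n" using U unfolding unitary_def by auto
  have [simp]: "dim_row U = n" "dim_col U = n" by (rule carrier_matD[OF Uc])+
  have U'c: "U' \<in> carrier_mat (Suc n) (Suc n)"
    unfolding U'_def using four_block_carrier_mat[of "1\<^sub>m 1" 1 1 U n n] by auto
  have adjU': "adj U' = four_block_mat (1\<^sub>m 1) (0\<^sub>m 1 n) (0\<^sub>m n 1) (adj U)"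
    by (rule eq_matI) (auto simp: U'_def)
  have "adj U' * U' = four_block_mat (1\<^sub>m 1) (0\<^sub>m 1 n) (0\<^sub>m n 1) (adj U * U)"
    unfolding adjU' unfolding U'_def by (subst mult_four_block_mat[of _ 1 1 _ n _ n _ _ 1 _ n]) auto
  then show "unitary (Suc n) U'" using U U'c unfolding unitary_def by simp
  have D: "mat_diag (Suc n) (\<lambda>i. complex_of_real (if i = 0 then c else l (i - 1)))
      = four_block_mat (mat_diag 1 (\<lambda>_. complex_of_real c)) (0\<^sub>m 1 n) (0\<^sub>m n 1)
          (mat_diag n (\<lambda>i. complex_of_real (l i)))"
    by (rule eq_matI) (auto simp: mat_diag_def)
  show "four_block_mat (mat_diag 1 (\<lambda>_. complex_of_real c)) (0\<^sub>m 1 n) (0\<^sub>m n 1)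
           (U * mat_diag n (\<lambda>i. complex_of_real (l i)) * adj U)
         = U' * mat_diag (Suc n) (\<lambda>i. complex_of_real (if i = 0 then c else l (i - 1))) * adj U'"
    unfolding D adjU' unfolding U'_def
    by (subst mult_four_block_mat[of _ 1 1 _ n _ n _ _ 1 _ n], auto,
        subst mult_four_block_mat[of _ 1 1 _ n _ n _ _ 1 _ n],
        auto simp: left_mult_zero_mat right_mult_zero_mat left_add_zero_mat right_add_zero_mat)
qed

lemma hermitian_unitary_diagonalization:
  assumes "hermitian n A"
  shows "\<exists>U l. unitary n U \<and> A = U * mat_diag n (\<lambda>i. complex_of_real (l i)) * adj U"
  using assms
proof (induction n arbitrary: A)
  case 0
  then have "A = 1\<^sub>m 0 * mat_diag 0 (\<lambda>i. complex_of_real 0) * adj (1\<^sub>m 0)"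
    unfolding hermitian_def by (intro eq_matI) auto
  moreover have "unitary 0 (1\<^sub>m 0)" unfolding unitary_def by auto
  ultimately show ?case by (intro exI[of _ "1\<^sub>m 0"] exI[of _ "\<lambda>_. 0"]) simp
next
  case (Suc n)
  have A: "A \<in> carrier_mat (Suc n) (Suc n)" using Suc.prems unfolding hermitian_def by auto
  obtain e v where "eigenvector A v e"
    using spectrum_non_empty[OF A] unfolding spectrum_def eigenvalue_def by auto
  then have v: "v \<in> carrier_vec (Suc n)" "v \<noteq> 0\<^sub>v (Suc n)" "A *\<^sub>v v = e \<cdot>\<^sub>v v"
    using A unfolding eigenvector_def by auto
  obtain W c where W: "unitary (Suc n) W" and colW: "col W 0 = c \<cdot>\<^sub>v v"
    using unitary_with_first_column[OF v(1,2)] by blast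
  have Wc: "W \<in> carrier_mat (Suc n) (Suc n)" using W unfolding unitary_def by auto
  have "A *\<^sub>v col W 0 = e \<cdot>\<^sub>v col W 0"
    unfolding colW using v A by (simp add: mult_mat_vec smult_smult_assoc mult.commute)
  note col0 = unitary_conj_first_column[OF A W this]
  define A' where "A' = adj W * A * W"
  have hA': "hermitian (Suc n) A'"
    unfolding A'_def by (rule hermitian_unitary_conj[OF Suc.prems Wc])
  obtain U l where U: "unitary n U"
    and lower: "mat n n (\<lambda>(i,j). A' $$ (Suc i, Suc j)) = U * mat_diag n (\<lambda>i. complex_of_real (l i)) * adj U"
    using Suc.IH[OF hermitian_lower_block[OF hA']] by blast
  define U' where "U' = four_block_mat (1\<^sub>m 1) (0\<^sub>m 1 n) (0\<^sub>m n 1) U"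
  define D where "D = mat_diag (Suc n) (\<lambda>i. complex_of_real (if i = 0 then Re e else l (i - 1)))"
  have U': "unitary (Suc n) U'" unfolding U'_def by (rule unitary_block_diag(1)[OF U])
  then have U'c: "U' \<in> carrier_mat (Suc n) (Suc n)" unfolding unitary_def by auto
  have "A' = four_block_mat (mat_diag 1 (\<lambda>_. complex_of_real (Re e))) (0\<^sub>m 1 n) (0\<^sub>m n 1)
               (U * mat_diag n (\<lambda>i. complex_of_real (l i)) * adj U)"
    using hermitian_first_column_block[OF hA' col0[folded A'_def]] unfolding lower .
  also have "\<dots> = U' * D * adj U'"
    unfolding U'_def D_def by (rule unitary_block_diag(2)[OF U])
  finally have A'_eq: "A' = U' * D * adj U'" .
  have "A = W * A' * adj W"
    unfolding A'_def by (rule unitary_conj_cancel[OF W A, symmetric])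
  also have "\<dots> = (W * U') * D * adj (W * U')"
    unfolding A'_eq adj_mult[OF Wc U'c] using Wc U'c
    by (simp add: D_def assoc_mult_mat[of _ "Suc n" "Suc n" _ "Suc n" _ "Suc n"])
  finally have "A = (W * U') * D * adj (W * U')" .
  moreover have "unitary (Suc n) (W * U')" by (rule unitary_mult[OF W U'])
  ultimately show ?case unfolding D_def
    by (intro exI[of _ "W * U'"] exI[of _ "\<lambda>i. if i = 0 then Re e else l (i - 1)"]) simp
qed

lemma qform_unitary_diag_col:
  assumes U: "unitary n U" and i: "i < n"
  shows "qform (U * mat_diag n (\<lambda>i. complex_of_real (l i)) * adj U) (col U i) = complex_of_real (l i)"
proof -
  let ?D = "mat_diag n (\<lambda>i. complex_of_real (l i))"
  let ?A = "U * ?D * adj U"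
  define v where "v = col U i"
  have Uc: "U \<in> carrier_mat n n" and UU: "adj U * U = 1\<^sub>m n" using U unfolding unitary_def by auto
  have dv: "dim_vec v = n" unfolding v_def using Uc by simp
  have "?A * U = U * ?D * (adj U * U)" using Uc by (simp add: assoc_mult_mat[of _ n n _ n _ n])
  then have AU: "?A * U = U * ?D" unfolding UU using Uc by simp
  have "?A *\<^sub>v v = col (?A * U) i"
    unfolding v_def by (rule col_mult2[symmetric, of _ n n _ n]) (use i Uc in auto)
  also have "\<dots> = complex_of_real (l i) \<cdot>\<^sub>v v"
    unfolding AU v_def by (subst mat_diag_mult_right[of _ n]) (use Uc i in \<open>auto intro!: eq_vecI\<close>)
  finally have Av: "?A *\<^sub>v v = complex_of_real (l i) \<cdot>\<^sub>v v" .
  have "(\<Sum>k<n. cnj (v$k) * v$k) = (\<Sum>k<n. U $$ (k,i) * cnj (U $$ (k,i)))"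
    unfolding v_def using i Uc by (simp add: mult.commute)
  also have "\<dots> = complex_of_real (\<Sum>k<n. (cmod (U $$ (k,i)))\<^sup>2)"
    by (simp only: of_real_sum complex_norm_square)
  also have "\<dots> = 1" using unitary_col_norm[OF U i] by simp
  finally have "(\<Sum>k<n. cnj (v$k) * v$k) = 1" .
  then show ?thesis
    unfolding qform_def Av dv v_def[symmetric] using dv
    by (simp add: sum_distrib_left[symmetric] mult.left_commute)
qed

lemma pos_def_unitary_diagonalization:
  assumes "pos_def n A"
  shows "\<exists>U l. unitary n U \<and> (\<forall>i<n. l i > 0) \<and> A = U * mat_diag n (\<lambda>i. complex_of_real (l i)) * adj U"
proof -
  obtain U l where U: "unitary n U" and A: "A = U * mat_diag n (\<lambda>i. complex_of_real (l i)) * adj U"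
    using hermitian_unitary_diagonalization assms unfolding pos_def_def by blast
  have "l i > 0" if i: "i < n" for i
  proof -
    have Uc: "U \<in> carrier_mat n n" using U unfolding unitary_def by auto
    have "col U i \<noteq> 0\<^sub>v n"
    proof
      assume "col U i = 0\<^sub>v n"
      then have "\<forall>j<n. U $$ (j,i) = 0" using Uc by (metis carrier_matD index_col index_zero_vec(1) i)
      then show False using unitary_col_norm[OF U i] by simp
    qed
    then have "Re (qform A (col U i)) > 0"
      using assms Uc unfolding pos_def_def by auto
    then show ?thesis unfolding A qform_unitary_diag_col[OF U i] by simp
  qed
  then show ?thesis using U A by blast
qed

lemma mat_powr_pos_def:
  assumes "pos_def n A"
  shows "\<exists>U l. unitary n U \<and> (\<forall>i<n. l i > 0) \<and> A = U * mat_diag n (\<lambda>i. complex_of_real (l i)) * adj U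
     \<and> mat_powr A p = U * mat_diag n (\<lambda>i. complex_of_real (l i powr p)) * adj U"
proof -
  have dA: "dim_row A = n" using assms unfolding pos_def_def hermitian_def by auto
  let ?P = "\<lambda>B. \<exists>U l. unitary n U \<and> (\<forall>i<n. l i > (0::real)) \<and>
      A = U * mat_diag n (\<lambda>i. complex_of_real (l i)) * adj U \<and>
      B = U * mat_diag n (\<lambda>i. complex_of_real (l i powr p)) * adj U"
  txt \<open>The \<open>SOME\<close> in \<open>mat_powr\<close> needs only one witness.\<close>
  obtain U l where "unitary n U" "\<forall>i<n. l i > 0" "A = U * mat_diag n (\<lambda>i. complex_of_real (l i)) * adj U"
    using pos_def_unitary_diagonalization[OF assms] by blast
  then have "?P (U * mat_diag n (\<lambda>i. complex_of_real (l i powr p)) * adj U)" by blast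
  then have "?P (SOME B. ?P B)" by (rule someI)
  then show ?thesis unfolding mat_powr_def dA by blast
qed

lemma det_unitary_diag:
  assumes U: "unitary n U"
  shows "det (U * mat_diag n (\<lambda>i. complex_of_real (l i)) * adj U) = complex_of_real (\<Prod>i<n. l i)"
proof -
  let ?D = "mat_diag n (\<lambda>i. complex_of_real (l i))"
  have Uc: "U \<in> carrier_mat n n" and UU: "adj U * U = 1\<^sub>m n" using U unfolding unitary_def by auto
  have "det (U * ?D * adj U) = det ?D * (det (adj U) * det U)"
    using Uc by (simp add: det_mult[of _ n])
  also have "det (adj U) * det U = 1" using det_mult[of "adj U" n U] UU Uc by simp
  also have "det ?D = prod_list (diag_mat ?D)"
    by (rule det_upper_triangular[of _ n]) (auto simp: upper_triangular_def mat_diag_def)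
  also have "\<dots> = (\<Prod>i<n. complex_of_real (l i))"
    by (simp add: diag_mat_def mat_diag_def prod.distinct_set_conv_list[symmetric] atLeast0LessThan)
  finally show ?thesis by simp
qed

lemma mtrace_unitary_diag_mult:
  assumes U: "unitary n U" and V: "unitary n V"
  defines "W \<equiv> adj U * V"
  shows "Re (mtrace ((U * mat_diag n (\<lambda>i. complex_of_real (a i)) * adj U)
                   * (V * mat_diag n (\<lambda>i. complex_of_real (b i)) * adj V)))
    = (\<Sum>i<n. \<Sum>j<n. a i * b j * (cmod (W $$ (i,j)))\<^sup>2)"
proof -
  let ?Da = "mat_diag n (\<lambda>i. complex_of_real (a i))"
  let ?Db = "mat_diag n (\<lambda>i. complex_of_real (b i))"
  have Uc: "U \<in> carrier_mat n n" and Vc: "V \<in> carrier_mat n n" using U V unfolding unitary_def by auto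
  have Wc: "W \<in> carrier_mat n n" unfolding W_def using Uc Vc by simp
  have adj_W: "adj W = adj V * U" unfolding W_def using Uc Vc by (simp add: adj_mult[of _ n n _ n])
  have "(U * ?Da * adj U) * (V * ?Db * adj V) = U * (?Da * adj U * V * ?Db * adj V)"
    using Uc Vc by (simp add: assoc_mult_mat[of _ n n _ n _ n])
  then have "mtrace ((U * ?Da * adj U) * (V * ?Db * adj V)) = mtrace ((?Da * adj U * V * ?Db * adj V) * U)"
    using mtrace_mult_comm[of U n n] Uc Vc by simp
  also have "(?Da * adj U * V * ?Db * adj V) * U = ?Da * (W * ?Db * adj W)"
    unfolding adj_W unfolding W_def using Uc Vc by (simp add: assoc_mult_mat[of _ n n _ n _ n])
  also have "mtrace (?Da * (W * ?Db * adj W))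
      = (\<Sum>i<n. complex_of_real (a i) * (\<Sum>j<n. W $$ (i,j) * complex_of_real (b j) * cnj (W $$ (i,j))))"
    unfolding mtrace_def using Wc
    by (subst mat_diag_mult_left[of _ n n], simp, subst mat_diag_mult_right[of _ n], simp,
        simp add: scalar_prod_def lessThan_atLeast0)
  also have "\<dots> = complex_of_real (\<Sum>i<n. \<Sum>j<n. a i * b j * (cmod (W $$ (i,j)))\<^sup>2)"
    by (simp add: of_real_sum sum_distrib_left complex_norm_square[unfolded of_real_power] mult_ac)
  finally show ?thesis by simp
qed

subsection \<open>Doubly stochastic matrices\<close>

definition doubly_stochastic :: "nat \<Rightarrow> (nat \<Rightarrow> nat \<Rightarrow> real) \<Rightarrow> bool" where
  "doubly_stochastic n P \<longleftrightarrow> (\<forall>i<n. \<forall>j<n. P i j \<ge> 0)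
     \<and> (\<forall>i<n. (\<Sum>j<n. P i j) = 1) \<and> (\<forall>j<n. (\<Sum>i<n. P i j) = 1)"

lemma doubly_stochastic_unitary:
  assumes "unitary n W"
  shows "doubly_stochastic n (\<lambda>i j. (cmod (W $$ (i,j)))\<^sup>2)"
  unfolding doubly_stochastic_def
  using unitary_row_norm[OF assms] unitary_col_norm[OF assms] by simp

lemma doubly_stochastic_sum_add:
  assumes "doubly_stochastic n P"
  shows "(\<Sum>i<n. \<Sum>j<n. P i j * (f i + g j)) = sum f {..<n} + sum g {..<n}"
proof -
  have "(\<Sum>i<n. \<Sum>j<n. P i j * f i) = (\<Sum>i<n. (\<Sum>j<n. P i j) * f i)"
    by (simp add: sum_distrib_right)
  moreover have "(\<Sum>i<n. \<Sum>j<n. P i j * g j) = (\<Sum>j<n. (\<Sum>i<n. P i j) * g j)"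
    by (subst sum.swap) (simp add: sum_distrib_right)
  ultimately show ?thesis
    using assms unfolding doubly_stochastic_def by (simp add: distrib_left sum.distrib)
qed

lemma ln_doubly_stochastic_sum_ge:
  assumes P: "doubly_stochastic n P" and "n > 0"
    and x: "\<And>i. i < n \<Longrightarrow> x i > 0" and y: "\<And>j. j < n \<Longrightarrow> y j > 0"
  shows "ln n + (\<Sum>i<n. ln (x i)) / n + (\<Sum>j<n. ln (y j)) / n
           \<le> ln (\<Sum>i<n. \<Sum>j<n. x i * y j * P i j)"
proof -
  define S where "S = {..<n} \<times> {..<n}"
  define w where "w = (\<lambda>(i,j). P i j / n)"
  define z where "z = (\<lambda>(i,j). n * x i * y j)"
  have P_nonneg: "P i j \<ge> 0" and P_row: "(\<Sum>j<n. P i j) = 1" if "i < n" "j < n" for i j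
    using P that unfolding doubly_stochastic_def by auto
  have ln_z: "ln (z (i,j)) = ln n + ln (x i) + ln (y j)" if "i < n" "j < n" for i j
    using \<open>n > 0\<close> x[OF that(1)] y[OF that(2)] by (simp add: z_def ln_mult)
  have "(\<Sum>k\<in>S. w k) = (\<Sum>i<n. \<Sum>j<n. P i j / n)"
    unfolding S_def sum.cartesian_product by (intro sum.cong) (auto simp: w_def)
  also have "\<dots> = 1" using P_row \<open>n > 0\<close> by (simp flip: sum_divide_distrib)
  finally have "(\<Sum>k\<in>S. w k * ln (z k)) \<le> ln (\<Sum>k\<in>S. w k *\<^sub>R z k)"
    using \<open>n > 0\<close> P_nonneg x y
    by (intro concave_on_sum[OF _ _ ln_concave]) (auto simp: S_def w_def z_def)
  also have "(\<Sum>k\<in>S. w k *\<^sub>R z k) = (\<Sum>i<n. \<Sum>j<n. x i * y j * P i j)"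
    unfolding S_def sum.cartesian_product using \<open>n > 0\<close>
    by (intro sum.cong) (auto simp: w_def z_def)
  finally have jensen: "(\<Sum>k\<in>S. w k * ln (z k)) \<le> ln (\<Sum>i<n. \<Sum>j<n. x i * y j * P i j)" .
  have "(\<Sum>k\<in>S. w k * ln (z k))
      = (\<Sum>i<n. \<Sum>j<n. P i j * ((ln n + ln (x i)) / n + ln (y j) / n))"
    unfolding S_def sum.cartesian_product
    by (intro sum.cong) (auto simp: w_def ln_z add_divide_distrib distrib_left)
  also have "\<dots> = (\<Sum>i<n. (ln n + ln (x i)) / n) + (\<Sum>j<n. ln (y j) / n)"
    by (rule doubly_stochastic_sum_add[OF P])
  also have "\<dots> = ln n + (\<Sum>i<n. ln (x i)) / n + (\<Sum>j<n. ln (y j)) / n"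
    using \<open>n > 0\<close> by (simp add: sum.distrib add_divide_distrib flip: sum_divide_distrib)
  finally show ?thesis using jensen by simp
qed

lemma mtrace_mat_powr_spectral:
  assumes "pos_def n \<rho>" and "pos_def n \<sigma>"
  obtains l m P where "\<And>i. i < n \<Longrightarrow> l i > 0" and "\<And>i. i < n \<Longrightarrow> m i > 0"
    and "doubly_stochastic n P"
    and "Re (det \<rho>) = (\<Prod>i<n. l i)" and "Re (det \<sigma>) = (\<Prod>i<n. m i)"
    and "Re (mtrace (mat_powr \<rho> a * mat_powr \<sigma> c)) = (\<Sum>i<n. \<Sum>j<n. l i powr a * m j powr c * P i j)"
proof -
  obtain U l where U: "unitary n U" and l: "\<forall>i<n. l i > 0"
    and \<rho>: "\<rho> = U * mat_diag n (\<lambda>i. complex_of_real (l i)) * adj U"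
    and \<rho>_powr: "mat_powr \<rho> a = U * mat_diag n (\<lambda>i. complex_of_real (l i powr a)) * adj U"
    using mat_powr_pos_def[OF assms(1)] by blast
  obtain V m where V: "unitary n V" and m: "\<forall>i<n. m i > 0"
    and \<sigma>: "\<sigma> = V * mat_diag n (\<lambda>i. complex_of_real (m i)) * adj V"
    and \<sigma>_powr: "mat_powr \<sigma> c = V * mat_diag n (\<lambda>i. complex_of_real (m i powr c)) * adj V"
    using mat_powr_pos_def[OF assms(2)] by blast
  show ?thesis
  proof
    show "doubly_stochastic n (\<lambda>i j. (cmod ((adj U * V) $$ (i,j)))\<^sup>2)"
      by (rule doubly_stochastic_unitary[OF unitary_mult[OF unitary_adj[OF U] V]])
    show "Re (mtrace (mat_powr \<rho> a * mat_powr \<sigma> c))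
        = (\<Sum>i<n. \<Sum>j<n. l i powr a * m j powr c * (cmod ((adj U * V) $$ (i,j)))\<^sup>2)"
      unfolding \<rho>_powr \<sigma>_powr by (rule mtrace_unitary_diag_mult[OF U V])
  qed (use l m in \<open>auto simp: \<rho> \<sigma> det_unitary_diag[OF U] det_unitary_diag[OF V] simp flip: of_real_prod\<close>)
qed

lemma ln_mtrace_mat_powr_ge:
  assumes "pos_def d \<rho>" and "pos_def d \<sigma>" and "d \<noteq> 0"
  shows "ln d + \<alpha> / d * ln (Re (det \<rho>)) + (1 - \<alpha>) / d * ln (Re (det \<sigma>))
           \<le> ln (Re (mtrace (mat_powr \<rho> \<alpha> * mat_powr \<sigma> (1 - \<alpha>))))"
proof -
  obtain l m P where l: "\<And>i. i < d \<Longrightarrow> l i > 0" and m: "\<And>i. i < d \<Longrightarrow> m i > 0"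
    and P: "doubly_stochastic d P"
    and det_\<rho>: "Re (det \<rho>) = (\<Prod>i<d. l i)" and det_\<sigma>: "Re (det \<sigma>) = (\<Prod>i<d. m i)"
    and trace: "Re (mtrace (mat_powr \<rho> \<alpha> * mat_powr \<sigma> (1 - \<alpha>)))
                  = (\<Sum>i<d. \<Sum>j<d. l i powr \<alpha> * m j powr (1 - \<alpha>) * P i j)"
    using mtrace_mat_powr_spectral[OF assms(1,2)] by blast
  have "ln (Re (det \<rho>)) = (\<Sum>i<d. ln (l i))"
    unfolding det_\<rho> by (intro ln_prod) (auto dest: l)
  moreover have "ln (Re (det \<sigma>)) = (\<Sum>j<d. ln (m j))"
    unfolding det_\<sigma> by (intro ln_prod) (auto dest: m)
  ultimately have "ln d + \<alpha> / d * ln (Re (det \<rho>)) + (1 - \<alpha>) / d * ln (Re (det \<sigma>))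
      = ln d + (\<Sum>i<d. ln (l i powr \<alpha>)) / d + (\<Sum>j<d. ln (m j powr (1 - \<alpha>))) / d"
    using l m by (simp add: ln_powr sum_distrib_left sum_divide_distrib)
  also have "\<dots> \<le> ln (Re (mtrace (mat_powr \<rho> \<alpha> * mat_powr \<sigma> (1 - \<alpha>))))"
    unfolding trace using \<open>d \<noteq> 0\<close> by (intro ln_doubly_stochastic_sum_ge[OF P]) (auto dest: l m)
  finally show ?thesis .
qed

theorem mainTheorem5:
  fixes \<rho> \<sigma> :: "complex mat" and d :: nat and \<alpha> b :: real
  assumes "b > 1"
    and "density_matrix d \<rho>" and "pos_def d \<rho>"
    and "density_matrix d \<sigma>" and "pos_def d \<sigma>"
    and "\<alpha> > 1"
  shows "renyi b \<alpha> \<rho> \<sigma> \<ge> 1 / (\<alpha> - 1) * (log b (real d)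
           + \<alpha> / real d * log b (Re (det \<rho>))
           + (1 - \<alpha>) / real d * log b (Re (det \<sigma>)))"
proof -
  have "d \<noteq> 0"
  proof
    assume "d = 0"
    moreover have "\<rho> \<in> carrier_mat d d" and "mtrace \<rho> = 1"
      using assms(2) unfolding density_matrix_def pos_semidef_def hermitian_def by auto
    ultimately show False unfolding mtrace_def by simp
  qed
  have "log b d + \<alpha> / d * log b (Re (det \<rho>)) + (1 - \<alpha>) / d * log b (Re (det \<sigma>))
      = (ln d + \<alpha> / d * ln (Re (det \<rho>)) + (1 - \<alpha>) / d * ln (Re (det \<sigma>))) / ln b"
    by (simp add: log_def add_divide_distrib)
  also have "\<dots> \<le> log b (Re (mtrace (mat_powr \<rho> \<alpha> * mat_powr \<sigma> (1 - \<alpha>))))"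
    unfolding log_def using ln_mtrace_mat_powr_ge[OF assms(3,5) \<open>d \<noteq> 0\<close>] assms(1)
    by (simp add: divide_right_mono)
  finally show ?thesis
    unfolding renyi_def by (rule mult_left_mono) (use assms(6) in simp)
qed

end
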